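(* Let $(\|\cdot\|,\mathcal{P})$ be a sparsity structure on $\mathcal{E}$, let $B:\mathcal{X}\to\mathcal{E}$ be linear, and let $A:\mathcal{X}\to\mathbb{R}^n$ be linear. For $P\in\mathcal{P}$ define $$\mathcal{C}_P=\bigcup_{x\in\mathcal{X}:\ PBx=Bx}\mathcal{T}(x),\qquad \mathcal{D}_P=\{z\in\mathcal{X}:\ \|\bar P Bz\|\le\|PBz\|\}.$$ Then $\mathcal{C}_P\subseteq\mathcal{D}_P$ for every $P\in\mathcal{P}$. Consequently, for every $k\ge 0$, $\mu_k(A)\ge\sigma_k(A)$, where $$\mu_k(A)=\inf_{\substack{P\in\mathcal{P}_k,\ x\in\mathcal{X}\\ PBx=Bx}}\ \inf_{z\in\mathcal{T}(x),\,z\ne 0}\frac{\|Az\|_2}{\|z\|_2},\qquad \sigma_k(A)=\inf_{\substack{P\in\mathcal{P}_k,\ z\in\mathcal{X},\ z\neq 0\\ \|\bar PBz\|\le\|PBz\|}}\frac{\|Az\|_2}{\|z\|_2}.$$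
   Context: Sparsity structure: let $\mathcal{X},\mathcal{E}$ be finite-dimensional Euclidean spaces and $B:\mathcal{X}\to\mathcal{E}$ a linear map. A sparsity structure on $\mathcal{E}$ is a norm $\|\cdot\|$ on $\mathcal{E}$, with dual norm $\|\cdot\|_*$, together with a family $\mathcal{P}$ of linear maps $\mathcal{E}\to\mathcal{E}$ such that: (i) every $P\in\mathcal{P}$ is a projector, $P^2=P$; (ii) every $P\in\mathcal{P}$ is assigned a weight $\nu(P)\ge 0$ and a linear map $\bar P:\mathcal{E}\to\mathcal{E}$ with $P\bar P=0$; (iii) for every $P\in\mathcal{P}$ and all $f,g\in\mathcal{E}$, $\|P^*f+\bar P^*g\|_*\le\max(\|f\|_*,\|g\|_* )$, where $P^*$ and $\bar P^*$ denote adjoints. For $k\ge 0$, $\mathcal{P}_k=\{P\in\mathcal{P}:\nu(P)\le k\}$. Tangent cone: for $x\in\mathcal{X}$, $\mathcal{T}(x)=\{\lambda z:\ \lambda\ge 0,\ z\in\mathcal{X},\ \|Bx+Bz\|\le\|Bx\|\}$. $\|\cdot\|_2$ is the Euclidean norm. *)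

theory Defs
  imports "HOL-Analysis.Analysis"
begin

definition is_norm :: "('e::real_vector \<Rightarrow> real) \<Rightarrow> bool" where
  "is_norm N \<longleftrightarrow> (\<forall>x y. N (x + y) \<le> N x + N y) \<and> (\<forall>c x. N (c *\<^sub>R x) = \<bar>c\<bar> * N x)
     \<and> (\<forall>x. N x = 0 \<longleftrightarrow> x = 0)"

definition dual_norm :: "('e::real_inner \<Rightarrow> real) \<Rightarrow> 'e \<Rightarrow> real" where
  "dual_norm N f = Sup {f \<bullet> e | e. N e \<le> 1}"

definition sparsity_structure ::
  "('e::euclidean_space \<Rightarrow> real) \<Rightarrow> ('e \<Rightarrow> 'e) set \<Rightarrow> (('e \<Rightarrow> 'e) \<Rightarrow> real)
     \<Rightarrow> (('e \<Rightarrow> 'e) \<Rightarrow> ('e \<Rightarrow> 'e)) \<Rightarrow> bool" where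
  "sparsity_structure N PP nu Pbar \<longleftrightarrow> is_norm N \<and>
     (\<forall>P\<in>PP. linear P \<and> P \<circ> P = P \<and> nu P \<ge> 0 \<and> linear (Pbar P) \<and> P \<circ> Pbar P = (\<lambda>_. 0) \<and>
        (\<forall>f g. dual_norm N (adjoint P f + adjoint (Pbar P) g) \<le> max (dual_norm N f) (dual_norm N g)))"

definition PP_k :: "('e \<Rightarrow> 'e) set \<Rightarrow> (('e \<Rightarrow> 'e) \<Rightarrow> real) \<Rightarrow> real \<Rightarrow> ('e \<Rightarrow> 'e) set" where
  "PP_k PP nu k = {P \<in> PP. nu P \<le> k}"

definition tangent_cone ::
  "('e::real_vector \<Rightarrow> real) \<Rightarrow> ('x::real_vector \<Rightarrow> 'e) \<Rightarrow> 'x \<Rightarrow> 'x set" where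
  "tangent_cone N B x = {l *\<^sub>R z | l z. l \<ge> 0 \<and> N (B x + B z) \<le> N (B x)}"

definition C_set ::
  "('e::real_vector \<Rightarrow> real) \<Rightarrow> ('x::real_vector \<Rightarrow> 'e) \<Rightarrow> ('e \<Rightarrow> 'e) \<Rightarrow> 'x set" where
  "C_set N B P = (\<Union>x\<in>{x. P (B x) = B x}. tangent_cone N B x)"

definition D_set ::
  "('e::real_vector \<Rightarrow> real) \<Rightarrow> ('x::real_vector \<Rightarrow> 'e) \<Rightarrow> ('e \<Rightarrow> 'e) \<Rightarrow> ('e \<Rightarrow> 'e) \<Rightarrow> 'x set" where
  "D_set N B P Pb = {z. N (Pb (B z)) \<le> N (P (B z))}"

text \<open>Infima taken in the extended reals (infimum of the empty set is \<open>\<infinity>\<close>).\<close>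
definition mu_k ::
  "('e::real_vector \<Rightarrow> real) \<Rightarrow> ('e \<Rightarrow> 'e) set \<Rightarrow> (('e \<Rightarrow> 'e) \<Rightarrow> real)
   \<Rightarrow> ('x::real_normed_vector \<Rightarrow> 'e) \<Rightarrow> ('x \<Rightarrow> 'm::real_normed_vector) \<Rightarrow> real \<Rightarrow> ereal" where
  "mu_k N PP nu B A k = (INF (P, x) \<in> {(P, x). P \<in> PP_k PP nu k \<and> P (B x) = B x}.
      INF z \<in> tangent_cone N B x - {0}. ereal (norm (A z) / norm z))"

definition sigma_k ::
  "('e::real_vector \<Rightarrow> real) \<Rightarrow> ('e \<Rightarrow> 'e) set \<Rightarrow> (('e \<Rightarrow> 'e) \<Rightarrow> real) \<Rightarrow> (('e \<Rightarrow> 'e) \<Rightarrow> ('e \<Rightarrow> 'e))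
   \<Rightarrow> ('x::real_normed_vector \<Rightarrow> 'e) \<Rightarrow> ('x \<Rightarrow> 'm::real_normed_vector) \<Rightarrow> real \<Rightarrow> ereal" where
  "sigma_k N PP nu Pbar B A k = (INF (P, z) \<in> {(P, z). P \<in> PP_k PP nu k \<and> z \<noteq> 0 \<and>
      N (Pbar P (B z)) \<le> N (P (B z))}. ereal (norm (A z) / norm z))"

end

theory Submission
  imports Defs
begin

text \<open>
  Every \<open>P \<in> PP\<close> splits the norm: \<open>N (P u) + N (Pbar P u) \<le> N u\<close>. Indeed, if \<open>f\<close>
  and \<open>g\<close> are norming functionals of \<open>P u\<close> and \<open>Pbar P u\<close> (they exist by separating
  the unit ball of \<open>N\<close> from a point of its boundary), then by axiom (iii)
  \<open>adjoint P f + adjoint (Pbar P) g\<close> has dual norm at most 1, and evaluating it at \<open>u\<close>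
  gives the split. For \<open>u = B x\<close> with \<open>P (B x) = B x\<close> the split forces \<open>Pbar P (B x) = 0\<close>;
  for \<open>u = B x + B z\<close> with \<open>z\<close> in the tangent cone at \<open>x\<close> it gives
  \<open>N (B x) \<ge> N (B x + P (B z)) + N (Pbar P (B z)) \<ge> N (B x) - N (P (B z)) + N (Pbar P (B z))\<close>,
  so \<open>z \<in> D_set\<close>. Hence \<open>mu_k\<close> is an infimum over a subset of the index set of \<open>sigma_k\<close>.
\<close>

lemma is_norm_triangle: "is_norm N \<Longrightarrow> N (x + y) \<le> N x + N y"
  unfolding is_norm_def by blast

lemma is_norm_scaleR: "is_norm N \<Longrightarrow> N (c *\<^sub>R x) = \<bar>c\<bar> * N x"
  unfolding is_norm_def by blast

lemma is_norm_eq_0_iff: "is_norm N \<Longrightarrow> N x = 0 \<longleftrightarrow> x = 0"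
  unfolding is_norm_def by blast

lemma is_norm_zero: "is_norm N \<Longrightarrow> N 0 = 0"
  by (simp add: is_norm_eq_0_iff)

lemma is_norm_minus: "is_norm N \<Longrightarrow> N (- x) = N x"
  using is_norm_scaleR[of N "-1" x] by simp

lemma is_norm_nonneg: "is_norm N \<Longrightarrow> N x \<ge> 0"
  using is_norm_triangle[of N x "- x"] by (simp add: is_norm_zero is_norm_minus)

lemma is_norm_pos: "is_norm N \<Longrightarrow> x \<noteq> 0 \<Longrightarrow> N x > 0"
  using is_norm_nonneg[of N x] is_norm_eq_0_iff[of N x] by linarith

lemma is_norm_convex_combination:
  assumes "is_norm N" "u \<ge> 0" "v \<ge> 0"
  shows "N (u *\<^sub>R x + v *\<^sub>R y) \<le> u * N x + v * N y"
  using is_norm_triangle[OF assms(1), of "u *\<^sub>R x" "v *\<^sub>R y"] assms by (simp add: is_norm_scaleR)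

lemma is_norm_convex_on: "is_norm N \<Longrightarrow> convex_on UNIV N"
  unfolding convex_on_def by (simp add: is_norm_convex_combination)

lemma convex_is_norm_open_ball: "is_norm N \<Longrightarrow> convex {x. N x < r}"
proof (rule convexI, simp)
  fix x y and u v :: real
  assume n: "is_norm N" and "N x < r" "N y < r" "0 \<le> u" "0 \<le> v" "u + v = 1"
  then have "u * N x + v * N y \<le> u * max (N x) (N y) + v * max (N x) (N y)"
    by (intro add_mono mult_left_mono) auto
  also have "\<dots> < r" using \<open>u + v = 1\<close> \<open>N x < r\<close> \<open>N y < r\<close> by (simp add: distrib_right[symmetric])
  finally show "N (u *\<^sub>R x + v *\<^sub>R y) < r"
    using is_norm_convex_combination[OF n \<open>0 \<le> u\<close> \<open>0 \<le> v\<close>, of x y] by linarith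
qed

lemma is_norm_lower_bound:
  fixes N :: "'e::euclidean_space \<Rightarrow> real"
  assumes n: "is_norm N"
  obtains c where "c > 0" "\<And>x. c * norm x \<le> N x"
proof -
  have "continuous_on (sphere 0 1) N"
    by (rule continuous_on_subset[OF convex_on_continuous[OF open_UNIV is_norm_convex_on[OF n]]]) simp
  moreover have "sphere (0::'e) 1 \<noteq> {}" by simp
  ultimately obtain y where y: "y \<in> sphere (0::'e) 1" and min: "\<And>z. z \<in> sphere 0 1 \<Longrightarrow> N y \<le> N z"
    using continuous_attains_inf[OF compact_sphere] by blast
  have "N y * norm x \<le> N x" for x
  proof (cases "x = 0")
    case False
    then have "N y \<le> N ((1 / norm x) *\<^sub>R x)" using min by simp
    then show ?thesis using False by (simp add: is_norm_scaleR[OF n] pos_le_divide_eq)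
  qed (simp add: is_norm_zero[OF n])
  moreover have "N y > 0" using y by (intro is_norm_pos[OF n]) auto
  ultimately show thesis using that by blast
qed

lemma bdd_above_dual_norm_set:
  fixes N :: "'e::euclidean_space \<Rightarrow> real"
  assumes n: "is_norm N"
  shows "bdd_above {f \<bullet> e | e. N e \<le> 1}"
proof -
  obtain c where c: "c > 0" "\<And>x. c * norm x \<le> N x" using is_norm_lower_bound[OF n] by blast
  show ?thesis
  proof (rule bdd_aboveI)
    fix t assume "t \<in> {f \<bullet> e | e. N e \<le> 1}"
    then obtain e where t: "t = f \<bullet> e" and e: "N e \<le> 1" by blast
    have "norm e \<le> 1 / c" using c e order_trans[OF c(2)[of e] e] by (simp add: field_simps)
    then have "norm f * norm e \<le> norm f * (1 / c)" by (rule mult_left_mono) simp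
    then show "t \<le> norm f / c" using t Cauchy_Schwarz_ineq2[of f e] by simp
  qed
qed

lemma inner_le_if_dual_norm_le_1:
  fixes N :: "'e::euclidean_space \<Rightarrow> real"
  assumes n: "is_norm N" and w: "dual_norm N w \<le> 1"
  shows "w \<bullet> u \<le> N u"
proof (cases "u = 0")
  case False
  then have pos: "N u > 0" by (rule is_norm_pos[OF n])
  let ?v = "(1 / N u) *\<^sub>R u"
  have "N ?v = 1" using pos by (simp add: is_norm_scaleR[OF n])
  then have "w \<bullet> ?v \<in> {w \<bullet> e | e. N e \<le> 1}" by (intro CollectI exI[of _ ?v]) simp
  then have "w \<bullet> ?v \<le> dual_norm N w"
    unfolding dual_norm_def by (rule cSup_upper[OF _ bdd_above_dual_norm_set[OF n]])
  then have "w \<bullet> u \<le> dual_norm N w * N u" using pos by (simp add: divide_le_eq)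
  also have "\<dots> \<le> N u" using mult_right_mono[OF w, of "N u"] pos by simp
  finally show ?thesis .
qed (simp add: is_norm_zero[OF n])

lemma dual_norm_le_1_if_minorant:
  fixes N :: "'e::euclidean_space \<Rightarrow> real"
  assumes n: "is_norm N" and f: "\<And>e. f \<bullet> e \<le> N e"
  shows "dual_norm N f \<le> 1"
  unfolding dual_norm_def
proof (rule cSup_least)
  show "{f \<bullet> e | e. N e \<le> 1} \<noteq> {}" using is_norm_zero[OF n] by (auto intro!: exI[of _ 0])
  show "t \<le> 1" if "t \<in> {f \<bullet> e | e. N e \<le> 1}" for t
    using that f by (force intro: order_trans)
qed

text \<open>The separated set is the open unit ball of \<open>N\<close>; by homogeneity a functional bounded
  by \<open>b > 0\<close> on it is bounded by \<open>b N\<close> everywhere.\<close>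

lemma norming_functional_exists:
  fixes N :: "'e::euclidean_space \<Rightarrow> real"
  assumes n: "is_norm N"
  obtains f where "\<And>e. f \<bullet> e \<le> N e" "f \<bullet> v = N v"
proof (cases "v = 0")
  case True
  then show thesis using that[of 0] is_norm_nonneg[OF n] is_norm_zero[OF n] by simp
next
  case False
  define U where "U = {e. N e < 1}"
  have convex_U: "convex U"
    unfolding U_def by (rule convex_is_norm_open_ball[OF n])
  have scaled_in_U: "(1 / (2 * N e)) *\<^sub>R e \<in> U" if "e \<noteq> 0" for e
    using is_norm_pos[OF n that] by (simp add: U_def is_norm_scaleR[OF n])
  define p where "p = (1 / N v) *\<^sub>R v"
  have "N p = 1" using is_norm_pos[OF n False] by (simp add: p_def is_norm_scaleR[OF n])
  then have "U \<inter> {p} = {}" by (simp add: U_def)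
  moreover have "0 \<in> U" by (simp add: U_def is_norm_zero[OF n])
  ultimately obtain a b where "a \<noteq> 0" and below: "\<And>e. e \<in> U \<Longrightarrow> a \<bullet> e \<le> b" and "a \<bullet> p \<ge> b"
    using separating_hyperplane_sets[OF convex_U convex_singleton, of p] by blast
  have "0 < a \<bullet> ((1 / (2 * N a)) *\<^sub>R a)"
    using \<open>a \<noteq> 0\<close> is_norm_pos[OF n \<open>a \<noteq> 0\<close>] by simp
  then have "b > 0" using below[OF scaled_in_U[OF \<open>a \<noteq> 0\<close>]] by linarith
  define f where "f = (1 / b) *\<^sub>R a"
  have minorant: "f \<bullet> e \<le> N e" for e
  proof (rule dense_ge)
    fix s assume "N e < s"
    then have "s > 0" using is_norm_nonneg[OF n, of e] by linarith
    then have "(1 / s) *\<^sub>R e \<in> U" using \<open>N e < s\<close> by (simp add: U_def is_norm_scaleR[OF n])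
    then have "a \<bullet> ((1 / s) *\<^sub>R e) \<le> b" by (rule below)
    then have "a \<bullet> e \<le> b * s" using \<open>s > 0\<close> by (simp add: field_simps)
    then show "f \<bullet> e \<le> s" using \<open>b > 0\<close> by (simp add: f_def field_simps)
  qed
  have "f \<bullet> p = 1"
    using minorant[of p] \<open>N p = 1\<close> \<open>a \<bullet> p \<ge> b\<close> \<open>b > 0\<close> by (simp add: f_def field_simps)
  then have "f \<bullet> v = N v" using is_norm_pos[OF n False] by (simp add: p_def)
  then show thesis using that minorant by blast
qed

lemma sparsity_structure_is_norm: "sparsity_structure N PP nu Pbar \<Longrightarrow> is_norm N"
  unfolding sparsity_structure_def by blast

lemma sparsity_structure_linear:
  "sparsity_structure N PP nu Pbar \<Longrightarrow> P \<in> PP \<Longrightarrow> linear P \<and> linear (Pbar P)"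
  unfolding sparsity_structure_def by blast

lemma sparsity_structure_norm_split:
  fixes N :: "'e::euclidean_space \<Rightarrow> real"
  assumes ss: "sparsity_structure N PP nu Pbar" and P: "P \<in> PP"
  shows "N (P u) + N (Pbar P u) \<le> N u"
proof -
  note n = sparsity_structure_is_norm[OF ss]
  have "linear P" "linear (Pbar P)" using sparsity_structure_linear[OF ss P] by auto
  have dual: "dual_norm N (adjoint P f + adjoint (Pbar P) g) \<le> max (dual_norm N f) (dual_norm N g)"
    for f g using ss P unfolding sparsity_structure_def by blast
  obtain f where f: "\<And>e. f \<bullet> e \<le> N e" "f \<bullet> P u = N (P u)"
    using norming_functional_exists[OF n] by metis
  obtain g where g: "\<And>e. g \<bullet> e \<le> N e" "g \<bullet> Pbar P u = N (Pbar P u)"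
    using norming_functional_exists[OF n] by metis
  let ?w = "adjoint P f + adjoint (Pbar P) g"
  have "dual_norm N ?w \<le> 1"
    using dual[of f g] dual_norm_le_1_if_minorant[OF n f(1)] dual_norm_le_1_if_minorant[OF n g(1)]
    by linarith
  then have "?w \<bullet> u \<le> N u" by (rule inner_le_if_dual_norm_le_1[OF n])
  moreover have "?w \<bullet> u = f \<bullet> P u + g \<bullet> Pbar P u"
    using adjoint_clauses(2)[OF \<open>linear P\<close>] adjoint_clauses(2)[OF \<open>linear (Pbar P)\<close>]
    by (simp add: inner_add_left)
  ultimately show ?thesis using f g by simp
qed

lemma C_set_subset_D_set:
  fixes N :: "'e::euclidean_space \<Rightarrow> real"
  assumes ss: "sparsity_structure N PP nu Pbar" and P: "P \<in> PP" and "linear B"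
  shows "C_set N B P \<subseteq> D_set N B P (Pbar P)"
proof
  note n = sparsity_structure_is_norm[OF ss]
  note split = sparsity_structure_norm_split[OF ss P]
  have "linear P" "linear (Pbar P)" using sparsity_structure_linear[OF ss P] by auto
  fix y assume "y \<in> C_set N B P"
  then obtain x l z where x: "P (B x) = B x" and y: "y = l *\<^sub>R z" and "l \<ge> 0"
    and cone: "N (B x + B z) \<le> N (B x)"
    unfolding C_set_def tangent_cone_def by blast
  have "N (Pbar P (B x)) \<le> 0" using split[of "B x"] x by simp
  then have "Pbar P (B x) = 0" using is_norm_nonneg[OF n] is_norm_eq_0_iff[OF n] by (metis order.antisym)
  then have "N (B x + P (B z)) + N (Pbar P (B z)) \<le> N (B x + B z)"
    using split[of "B x + B z"] x linear_add[OF \<open>linear P\<close>] linear_add[OF \<open>linear (Pbar P)\<close>] by simp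
  moreover have "N (B x) \<le> N (B x + P (B z)) + N (P (B z))"
    using is_norm_triangle[OF n, of "B x + P (B z)" "- P (B z)"] by (simp add: is_norm_minus[OF n])
  ultimately have "N (Pbar P (B z)) \<le> N (P (B z))" using cone by linarith
  moreover have "B y = l *\<^sub>R B z" using y linear_scale[OF \<open>linear B\<close>] by simp
  ultimately show "y \<in> D_set N B P (Pbar P)"
    using \<open>l \<ge> 0\<close> unfolding D_set_def
    by (simp add: linear_scale[OF \<open>linear P\<close>] linear_scale[OF \<open>linear (Pbar P)\<close>]
        is_norm_scaleR[OF n] mult_left_mono)
qed

lemma sigma_k_le_mu_k:
  assumes "\<And>P. P \<in> PP \<Longrightarrow> C_set N B P \<subseteq> D_set N B P (Pbar P)"
  shows "sigma_k N PP nu Pbar B A k \<le> mu_k N PP nu B A k"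
  unfolding mu_k_def
proof (rule INF_greatest, clarify, rule INF_greatest)
  fix P x z assume P: "P \<in> PP_k PP nu k" and x: "P (B x) = B x" and z: "z \<in> tangent_cone N B x - {0}"
  then have "z \<in> D_set N B P (Pbar P)"
    using assms[of P] unfolding C_set_def PP_k_def by blast
  then show "sigma_k N PP nu Pbar B A k \<le> ereal (norm (A z) / norm z)"
    unfolding sigma_k_def D_set_def using P z by (intro INF_lower2[of "(P, z)"]) auto
qed

theorem lemma6:
  fixes N :: "'e::euclidean_space \<Rightarrow> real"
    and PP :: "('e \<Rightarrow> 'e) set"
    and nu :: "('e \<Rightarrow> 'e) \<Rightarrow> real"
    and Pbar :: "('e \<Rightarrow> 'e) \<Rightarrow> ('e \<Rightarrow> 'e)"
    and B :: "'x::euclidean_space \<Rightarrow> 'e"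
    and A :: "'x \<Rightarrow> real ^ 'n"
  assumes "sparsity_structure N PP nu Pbar"
    and "linear B"
    and "linear A"
  shows "(\<forall>P\<in>PP. C_set N B P \<subseteq> D_set N B P (Pbar P))
       \<and> (\<forall>k::real. k \<ge> 0 \<longrightarrow> mu_k N PP nu B A k \<ge> sigma_k N PP nu Pbar B A k)"
  using C_set_subset_D_set[OF assms(1) _ assms(2)] sigma_k_le_mu_k by blast

end
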